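(* Let $n$ be a prime and $1\le a_1<a_2\le n/2$ integers, and let $\lambda_j=\omega^{a_1 j}+\omega^{-a_1 j}+\omega^{a_2 j}+\omega^{-a_2 j}$, $j=0,\dots,n-1$, with $\omega=e^{2\pi i/n}$, be the eigenvalues of $A(C_n(a_1,a_2))$ (with eigenvector $(1,\omega^j,\dots,\omega^{(n-1)j})$ for $\lambda_j$). (i) If $n\nmid a_1^2+a_2^2$, then $A(C_n(a_1,a_2))$ has the simple eigenvalue $\lambda_0=4$, and every other eigenvalue has multiplicity exactly two; more precisely, for $j,k\in\{1,\dots,n-1\}$, $\lambda_j=\lambda_k$ if and only if $j=k$ or $n\mid j+k$. (ii) If $n\mid a_1^2+a_2^2$, then for $j,k\in\{1,\dots,n-1\}$, $\lambda_j=\lambda_k$ if and only if $j=k$, or $n\mid j+k$, or $n\mid j^2+k^2$.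
   Context: A circulant graph $C_n(a_1,a_2)$, with integers $1\le a_1<a_2\le n/2$, has vertex set $\{0,1,\dots,n-1\}$, and $i\sim j$ if and only if $i-j\equiv\pm a_1$ or $\pm a_2\pmod n$. Its adjacency matrix $A(C_n(a_1,a_2))$ is the $n\times n$ matrix with $A_{ij}=1$ if $i\sim j$ and $0$ otherwise. *)

theory Defs
  imports Complex_Main "Jordan_Normal_Form.Char_Poly" "HOL-Number_Theory.Cong"
begin

definition circ_adj :: "nat \<Rightarrow> nat \<Rightarrow> nat \<Rightarrow> complex mat" where
  "circ_adj n a1 a2 = mat n n (\<lambda>(i, j).
     if [int i - int j = int a1] (mod int n) \<or> [int i - int j = - int a1] (mod int n)
      \<or> [int i - int j = int a2] (mod int n) \<or> [int i - int j = - int a2] (mod int n)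
     then 1 else 0)"

definition omega :: "nat \<Rightarrow> complex" where
  "omega n = exp (2 * of_real pi * \<i> / of_nat n)"

definition circ_eig :: "nat \<Rightarrow> nat \<Rightarrow> nat \<Rightarrow> nat \<Rightarrow> complex" where
  "circ_eig n a1 a2 j = omega n ^ (a1 * j) + inverse (omega n ^ (a1 * j))
                      + omega n ^ (a2 * j) + inverse (omega n ^ (a2 * j))"

end

(*
  The adjacency matrix is circulant, hence diagonalised by the Fourier matrix (omega^(i j)),
  and its eigenvalues are the lambda_j, so multiplicities are counts of coinciding lambda_j.
  Now lambda_j is the sum of omega^e over the four exponents e = +-a1 j, +-a2 j.  Since
  1 + x + ... + x^(n-1) is irreducible over the rationals (Eisenstein at n after x -> x + 1),
  the only integer relations among 1, omega, ..., omega^(n-1) have all coefficients equal;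
  hence lambda_j = lambda_k forces the two multisets of exponents to agree modulo n.  Comparing
  squares, this happens iff j^2 = k^2, or a1^2 + a2^2 = 0 and j^2 + k^2 = 0, modulo n.
*)

theory Submission
  imports Defs "HOL-Library.Multiset" "Berlekamp_Zassenhaus.Factor_Bound"
begin

(* HOL-Algebra, loaded together with Gauss's lemma, reuses these names. *)
hide_const (open) Coset.order up_ring.coeff up_ring.monom module.smult

section \<open>Powers of a primitive root of unity\<close>

lemma omega_nonzero [simp]: "omega n \<noteq> 0"
  unfolding omega_def by simp

lemma omega_powi: "omega n powi x = cis (2 * pi * of_int x / of_nat n)"
proof -
  have "omega n = cis (2 * pi / of_nat n)"
    unfolding omega_def cis_conv_exp by (simp add: mult_ac)
  then show ?thesis
    by (simp add: cis_power_int mult_ac)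
qed

lemma omega_powi_eq_1_iff:
  assumes "n > 0"
  shows "omega n powi x = 1 \<longleftrightarrow> int n dvd x"
proof
  assume "omega n powi x = 1"
  then have "cos (2 * pi * of_int x / of_nat n) = 1"
    by (simp add: omega_powi complex_eq_iff)
  then obtain m :: int where "2 * pi * of_int x / of_nat n = of_int m * 2 * pi"
    by (subst (asm) cos_one_2pi_int) blast
  then have "real_of_int x = real_of_int (m * int n)"
    using assms by (simp add: field_simps)
  then show "int n dvd x"
    by (metis dvd_triv_right of_int_eq_iff)
next
  assume "int n dvd x"
  then obtain m where "x = int n * m"
    by blast
  then have "2 * pi * of_int x / of_nat n = 2 * pi * of_int m"
    using assms by simp
  then show "omega n powi x = 1"
    by (simp add: omega_powi)
qed

lemma omega_powi_eq_iff:
  assumes "n > 0"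
  shows "omega n powi x = omega n powi y \<longleftrightarrow> [x = y] (mod int n)"
proof -
  have "omega n powi x = omega n powi (x - y) * omega n powi y"
    by (simp flip: power_int_add)
  then have "omega n powi x = omega n powi y \<longleftrightarrow> omega n powi (x - y) = 1"
    by auto
  then show ?thesis
    by (simp add: omega_powi_eq_1_iff[OF assms] cong_iff_dvd_diff)
qed

lemma omega_powi_mod:
  assumes "n > 0"
  shows "omega n powi x = omega n ^ nat (x mod int n)"
proof -
  have "omega n powi x = omega n powi (x mod int n)"
    using assms by (simp add: omega_powi_eq_iff cong_def)
  then show ?thesis
    using assms by (simp flip: power_int_of_nat)
qed

lemma sum_omega_powi_eq_0:
  assumes "n > 0" and "\<not> int n dvd x"
  shows "(\<Sum>l<n. omega n powi (x * int l)) = 0"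
proof -
  define z where "z = omega n powi x"
  have "z \<noteq> 1" and "z ^ n = 1"
    using assms by (simp_all add: z_def omega_powi_eq_1_iff flip: power_int_mult power_int_of_nat)
  moreover have "(\<Sum>l<n. omega n powi (x * int l)) = (\<Sum>l<n. z ^ l)"
    by (simp add: z_def power_int_mult flip: power_int_of_nat)
  ultimately show ?thesis
    by (simp add: geometric_sum)
qed

section \<open>Integer relations among the powers of a root of unity of prime order\<close>

lemma eisenstein_dvd_coeff_0:
  fixes f g h :: "int poly" and q :: int
  assumes "prime q" and f: "f = g * h" and "degree h > 0"
    and low: "\<And>k. k < degree f \<Longrightarrow> q dvd coeff f k"
    and lead: "\<not> q dvd lead_coeff f"
  shows "q dvd coeff h 0"
proof -
  have "g \<noteq> 0" "h \<noteq> 0"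
    using lead f by auto
  then have deg_f: "degree f = degree g + degree h"
    using f by (simp add: degree_mult_eq)
  have "\<not> q dvd lead_coeff g"
    using lead f by (auto simp: lead_coeff_mult)
  then have ex: "\<exists>i. \<not> q dvd coeff g i"
    by blast
  define i where "i = (LEAST i. \<not> q dvd coeff g i)"
  have gi: "\<not> q dvd coeff g i"
    unfolding i_def using LeastI_ex[OF ex] .
  have below: "q dvd coeff g t" if "t < i" for t
    using that not_less_Least unfolding i_def by blast
  have "i \<le> degree g"
    using gi by (metis coeff_eq_0 dvd_0_right le_less_linear)
  then have "q dvd coeff f i"
    using low deg_f \<open>degree h > 0\<close> by simp
  moreover have "coeff f i = (\<Sum>t<i. coeff g t * coeff h (i - t)) + coeff g i * coeff h 0"
    by (simp add: f coeff_mult lessThan_Suc_atMost[symmetric])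
  moreover have "q dvd (\<Sum>t<i. coeff g t * coeff h (i - t))"
    by (intro dvd_sum) (simp add: below)
  ultimately have "q dvd coeff g i * coeff h 0"
    by (simp add: dvd_add_right_iff)
  with \<open>prime q\<close> gi show ?thesis
    by (simp add: prime_dvd_mult_iff)
qed

lemma eisenstein_irreducible\<^sub>d:
  fixes f :: "int poly" and q :: int
  assumes "prime q" and "degree f > 0"
    and "\<And>k. k < degree f \<Longrightarrow> q dvd coeff f k"
    and "\<not> q dvd lead_coeff f"
    and "\<not> q^2 dvd coeff f 0"
  shows "irreducible\<^sub>d f"
proof (rule irreducible\<^sub>dI)
  fix g h :: "int poly"
  assume "degree g > 0" "degree g < degree f" "degree h > 0" "degree h < degree f" and f: "f = g * h"
  have "q dvd coeff h 0"
    using eisenstein_dvd_coeff_0[OF \<open>prime q\<close> f \<open>degree h > 0\<close>] assms(3,4) by blast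
  moreover have "q dvd coeff g 0"
    using eisenstein_dvd_coeff_0[OF \<open>prime q\<close> _ \<open>degree g > 0\<close>, of f h] f assms(3,4)
    by (simp add: mult.commute)
  ultimately have "q^2 dvd coeff g 0 * coeff h 0"
    by (simp add: power2_eq_square mult_dvd_mono)
  with assms(5) show False
    by (simp add: f coeff_mult_0)
qed (fact \<open>degree f > 0\<close>)

definition geom_poly :: "nat \<Rightarrow> int poly" where
  "geom_poly p = (\<Sum>i<p. monom 1 i)"

lemma coeff_geom_poly: "coeff (geom_poly p) k = (if k < p then 1 else 0)"
  by (simp add: geom_poly_def coeff_sum)

lemma degree_geom_poly: "degree (geom_poly p) = p - 1"
proof (cases "p = 0")
  case False
  show ?thesis
  proof (rule antisym)
    show "degree (geom_poly p) \<le> p - 1"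
      by (rule degree_le) (auto simp: coeff_geom_poly)
    show "p - 1 \<le> degree (geom_poly p)"
      by (rule le_degree) (use False in \<open>simp add: coeff_geom_poly\<close>)
  qed
qed (simp add: geom_poly_def)

lemma x_mult_geom_poly_shifted: "[:0, 1:] * pcompose (geom_poly p) [:1, 1:] = [:1, 1:] ^ p - 1"
proof -
  have "(x - 1) * (\<Sum>i<p. x ^ i) = x ^ p - 1" for x :: "int poly"
    by (induction p) (simp_all add: algebra_simps)
  then have "([:0, 1:] - 1) * geom_poly p = [:0, 1:] ^ p - 1"
    by (simp add: geom_poly_def monom_altdef)
  then have "pcompose (([:0, 1:] - 1) * geom_poly p) [:1, 1:] = pcompose ([:0, 1:] ^ p - 1) [:1, 1:]"
    by (simp only:)
  moreover have "pcompose ([:0, 1:] - 1) [:1, 1:] = ([:1, 1:] - 1 :: int poly)"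
    by (simp add: pcompose_diff pcompose_pCons)
  moreover have "([:1, 1:] - 1 :: int poly) = [:0, 1:]"
    by (rule poly_eqI) (simp add: coeff_pCons split: nat.split)
  moreover have "pcompose ([:0, 1:] ^ p - 1) [:1, 1:] = ([:1, 1:] ^ p - 1 :: int poly)"
    by (simp add: pcompose_diff pcompose_hom.hom_power pcompose_pCons)
  ultimately show ?thesis
    by (simp only: pcompose_mult)
qed

lemma coeff_geom_poly_shifted:
  assumes "k < p"
  shows "coeff (pcompose (geom_poly p) [:1, 1:]) k = int (p choose Suc k)"
proof -
  have "coeff (pcompose (geom_poly p) [:1, 1:]) k = coeff ([:0, 1:] * pcompose (geom_poly p) [:1, 1:]) (Suc k)"
    by simp
  also have "\<dots> = coeff ([:1, 1:] ^ p - 1 :: int poly) (Suc k)"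
    by (simp only: x_mult_geom_poly_shifted)
  also have "\<dots> = int (p choose Suc k)"
    using assms coeff_linear_poly_power[of "Suc k" p "1 :: int" 1] by simp
  finally show ?thesis .
qed

lemma irreducible\<^sub>d_geom_poly_shifted:
  assumes "prime p"
  shows "irreducible\<^sub>d (pcompose (geom_poly p) [:1, 1:])" (is "irreducible\<^sub>d ?f")
proof -
  have p: "p > 1"
    using assms prime_gt_1_nat by blast
  have deg: "degree ?f = p - 1"
    by (simp add: degree_pcompose degree_geom_poly)
  show ?thesis
  proof (rule eisenstein_irreducible\<^sub>d[of "int p"])
    show "int p dvd coeff ?f k" if "k < degree ?f" for k
    proof -
      have "Suc k < p"
        using that deg by simp
      then have "coeff ?f k = int (p choose Suc k)"
        using coeff_geom_poly_shifted[of k p] by simp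
      moreover have "p dvd p choose Suc k"
        using \<open>Suc k < p\<close> assms by (simp add: dvd_choose_prime)
      ultimately show ?thesis
        by simp
    qed
    have "lead_coeff ?f = 1"
      using coeff_geom_poly_shifted[of "p - 1" p] deg p by simp
    then show "\<not> int p dvd lead_coeff ?f"
      using p by simp
    have "coeff ?f 0 = int p"
      using coeff_geom_poly_shifted[of 0 p] p by simp
    show "\<not> (int p)^2 dvd coeff ?f 0"
    proof
      assume "(int p)^2 dvd coeff ?f 0"
      then have "int p * int p \<le> int p * 1"
        using \<open>coeff ?f 0 = int p\<close> p by (auto dest!: zdvd_imp_le simp: power2_eq_square)
      then show False
        using p by simp
    qed
  qed (use assms p deg in simp_all)
qed

lemma irreducible\<^sub>d_geom_poly:
  assumes "prime p"
  shows "irreducible\<^sub>d (geom_poly p)"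
proof (rule irreducible\<^sub>dI)
  show "degree (geom_poly p) > 0"
    using prime_gt_1_nat[OF assms] by (simp add: degree_geom_poly)
  fix g h :: "int poly"
  assume deg_gh: "degree g > 0" "degree g < degree (geom_poly p)"
    "degree h > 0" "degree h < degree (geom_poly p)" and "geom_poly p = g * h"
  then have "pcompose (geom_poly p) [:1, 1:] = pcompose g [:1, 1:] * pcompose h [:1, 1:]"
    by (simp add: pcompose_mult)
  with irreducible\<^sub>dD(2)[OF irreducible\<^sub>d_geom_poly_shifted[OF assms]] deg_gh show False
    by (simp add: degree_pcompose)
qed

lemma poly_geom_poly_omega:
  assumes "p > 1"
  shows "poly (map_poly of_rat (map_poly rat_of_int (geom_poly p))) (omega p) = 0"
proof -
  have "map_poly of_rat (map_poly rat_of_int (geom_poly p)) = (\<Sum>x<p. monom 1 x :: complex poly)"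
    by (rule poly_eqI) (simp add: coeff_geom_poly coeff_map_poly coeff_sum)
  then have "poly (map_poly of_rat (map_poly rat_of_int (geom_poly p))) (omega p)
      = (\<Sum>x<p. omega p powi (1 * int x))"
    by (simp add: poly_sum poly_monom power_int_of_nat)
  also have "\<dots> = 0"
    using assms by (intro sum_omega_powi_eq_0) auto
  finally show ?thesis .
qed

lemma geom_poly_dvd_if_poly_omega_eq_0:
  fixes P :: "rat poly"
  assumes p: "prime p" and root: "poly (map_poly of_rat P) (omega p) = 0"
  shows "map_poly rat_of_int (geom_poly p) dvd P"
proof -
  define Phi :: "rat poly" where "Phi = map_poly rat_of_int (geom_poly p)"
  define ev :: "rat poly \<Rightarrow> complex" where "ev q = poly (map_poly of_rat q) (omega p)" for q
  interpret ev_hom: map_poly_comm_semiring_hom "of_rat :: rat \<Rightarrow> complex" ..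
  have ev_mult: "ev (q * r) = ev q * ev r" and ev_add: "ev (q + r) = ev q + ev r" for q r
    by (simp_all add: ev_def ev_hom.hom_mult hom_distribs)
  have "p > 1"
    using p prime_gt_1_nat by blast
  have "ev Phi = 0"
    using poly_geom_poly_omega[OF \<open>p > 1\<close>] by (simp add: ev_def Phi_def)
  have irr: "irreducible\<^sub>d Phi"
    unfolding Phi_def by (rule irreducible\<^sub>d_int_rat[OF irreducible\<^sub>d_geom_poly[OF p]])
  define g where "g = gcd P Phi"
  obtain u v where "u * P + v * Phi = g"
    unfolding g_def by (metis bezout_coefficients surj_pair)
  moreover have "ev P = 0"
    using root by (simp add: ev_def)
  ultimately have "ev g = 0"
    using \<open>ev Phi = 0\<close> by (auto simp: ev_mult ev_add)
  have "g \<noteq> 0"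
    using irreducible\<^sub>dD(1)[OF irr] by (auto simp: g_def)
  have "degree g > 0"
  proof (rule ccontr)
    assume "\<not> degree g > 0"
    then have g_const: "[:coeff g 0:] = g"
      by (simp add: degree_0_id)
    then have "coeff g 0 \<noteq> 0"
      using \<open>g \<noteq> 0\<close> by auto
    moreover have "ev [:coeff g 0:] = 0"
      using \<open>ev g = 0\<close> by (simp only: g_const)
    ultimately show False
      by (simp add: ev_def)
  qed
  moreover have "g dvd Phi"
    by (simp add: g_def)
  ultimately obtain d where "d \<noteq> 0" "Phi = smult d g"
    using irreducible\<^sub>d_dvd_smult[OF _ irr] by blast
  then have "g = smult (inverse d) Phi"
    by simp
  then have "Phi dvd g"
    by (simp add: dvd_smult)
  then show ?thesis
    by (simp add: Phi_def g_def)
qed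

lemma omega_powers_int_combination_eq_0_imp_const:
  fixes c :: "nat \<Rightarrow> int"
  assumes p: "prime p" and sum: "(\<Sum>x<p. of_int (c x) * omega p ^ x) = 0" and "x < p"
  shows "c x = c 0"
proof -
  have "p > 1"
    using p prime_gt_1_nat by blast
  define Phi :: "rat poly" where "Phi = map_poly rat_of_int (geom_poly p)"
  define P :: "rat poly" where "P = (\<Sum>x<p. monom (of_int (c x)) x)"
  have coeff_P: "coeff P k = (if k < p then of_int (c k) else 0)" for k
    by (simp add: P_def coeff_sum)
  have coeff_Phi: "coeff Phi k = (if k < p then 1 else 0)" for k
    by (simp add: Phi_def coeff_geom_poly)
  have "map_poly of_rat P = (\<Sum>x<p. monom (of_int (c x)) x :: complex poly)"
    by (rule poly_eqI) (simp add: coeff_P coeff_map_poly coeff_sum)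
  then have "poly (map_poly of_rat P) (omega p) = 0"
    using sum by (simp add: poly_sum poly_monom)
  then obtain r where P_eq: "P = Phi * r"
    unfolding Phi_def using geom_poly_dvd_if_poly_omega_eq_0[OF p] by blast
  have "Phi \<noteq> 0"
    using coeff_Phi[of 0] \<open>p > 1\<close> by auto
  moreover have "degree P \<le> degree Phi"
    by (rule degree_le) (auto simp: coeff_P Phi_def degree_geom_poly)
  ultimately have "degree r = 0"
    using P_eq by (cases "r = 0") (auto simp: degree_mult_eq)
  then have "P = Phi * [:coeff r 0:]"
    using P_eq by (simp add: degree_0_id)
  then have "P = smult (coeff r 0) Phi"
    by simp
  then have "coeff P x = coeff P 0"
    using \<open>x < p\<close> \<open>p > 1\<close> by (simp add: coeff_Phi)
  then show ?thesis
    using \<open>x < p\<close> \<open>p > 1\<close> by (simp add: coeff_P)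
qed

lemma sum_mset_eq_sum_count:
  assumes "finite S" and "set_mset A \<subseteq> S"
  shows "(\<Sum>x\<in>#A. f x) = (\<Sum>x\<in>S. of_nat (count A x) * f x)"
  using assms(2)
proof (induction A)
  case empty
  show ?case
    by simp
next
  case (add a A)
  have "of_nat (count (add_mset a A) x) * f x = of_nat (count A x) * f x + (if x = a then f x else 0)"
    for x
    by (auto simp: algebra_simps)
  then have "(\<Sum>x\<in>S. of_nat (count (add_mset a A) x) * f x)
      = (\<Sum>x\<in>S. of_nat (count A x) * f x) + (\<Sum>x\<in>S. if x = a then f x else 0)"
    by (simp add: sum.distrib)
  also have "(\<Sum>x\<in>S. if x = a then f x else 0) = f a"
    using add.prems assms(1) by simp
  finally show ?case
    using add by (simp add: add.commute)
qed

lemma image_mset_mod_eq_if_omega_sums_eq: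
  fixes M N :: "int multiset"
  assumes p: "prime p" and "size M = size N"
    and "(\<Sum>e\<in>#M. omega p powi e) = (\<Sum>e\<in>#N. omega p powi e)"
  shows "image_mset (\<lambda>e. e mod int p) M = image_mset (\<lambda>e. e mod int p) N"
proof -
  have "p > 0"
    using p prime_gt_0_nat by blast
  define R where "R A = image_mset (\<lambda>e. nat (e mod int p)) A" for A :: "int multiset"
  have R_below: "set_mset (R A) \<subseteq> {..<p}" for A
    using \<open>p > 0\<close> by (auto simp: R_def nat_less_iff)
  have sum_R: "(\<Sum>e\<in>#A. omega p powi e) = (\<Sum>x<p. of_nat (count (R A) x) * omega p ^ x)" for A
    using sum_mset_eq_sum_count[OF finite_lessThan R_below[of A], where f = "\<lambda>x. omega p ^ x"]
    by (simp add: R_def omega_powi_mod[OF \<open>p > 0\<close>] multiset.map_comp o_def)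
  have size_R: "(\<Sum>x<p. int (count (R A) x)) = int (size A)" for A
    using sum_mset_eq_sum_count[OF finite_lessThan R_below[of A], where f = "\<lambda>x. 1 :: int"] by (simp add: R_def)
  define c where "c x = int (count (R M) x) - int (count (R N) x)" for x
  have lin_comb: "(\<Sum>x<p. of_int (c x) * omega p ^ x) = 0"
    using assms(3) by (simp add: sum_R c_def sum_subtractf left_diff_distrib)
  have c_const: "c x = c 0" if "x < p" for x
    by (rule omega_powers_int_combination_eq_0_imp_const[OF p lin_comb that])
  have "(\<Sum>x<p. c x) = (\<Sum>x<p. c 0)"
    by (intro sum.cong refl c_const) simp
  then have "of_nat p * c 0 = (\<Sum>x<p. c x)"
    by simp
  also have "\<dots> = 0"
    using size_R[of M] size_R[of N] \<open>size M = size N\<close> by (simp add: c_def sum_subtractf)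
  finally have "count (R M) x = count (R N) x" if "x < p" for x
    using c_const[OF that] \<open>p > 0\<close> by (simp add: c_def)
  moreover have "count (R M) x = 0 \<and> count (R N) x = 0" if "x \<ge> p" for x
    using R_below that by (meson count_inI lessThan_iff not_le subsetD)
  ultimately have "R M = R N"
    by (metis multiset_eqI not_le)
  then have "image_mset int (R M) = image_mset int (R N)"
    by simp
  moreover have "image_mset int (R A) = image_mset (\<lambda>e. e mod int p) A" for A
    using \<open>p > 0\<close> by (simp add: R_def multiset.map_comp o_def)
  ultimately show ?thesis
    by simp
qed

section \<open>Coincidences among the eigenvalues\<close>

lemma cong_squares_iff_int_dvd:
  fixes p j k :: nat
  shows "[j^2 = k^2] (mod p) \<longleftrightarrow> int p dvd (int j)^2 - (int k)^2"
proof -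
  have "[j^2 = k^2] (mod p) \<longleftrightarrow> [int (j^2) = int (k^2)] (mod int p)"
    by (rule cong_int_iff[symmetric])
  then show ?thesis
    by (simp add: cong_iff_dvd_diff)
qed

lemma prime_dvd_square_diff_iff:
  fixes x y :: int
  assumes "prime q"
  shows "q dvd x^2 - y^2 \<longleftrightarrow> [x = y] (mod q) \<or> [x = - y] (mod q)"
proof -
  have "x^2 - y^2 = (x - y) * (x + y)"
    by (simp add: algebra_simps power2_eq_square)
  then show ?thesis
    using assms by (simp add: prime_dvd_mult_iff cong_iff_dvd_diff)
qed

lemma omega_powi_add_neg_eq:
  assumes "prime p" and "int p dvd x^2 - y^2"
  shows "omega p powi x + omega p powi (- x) = omega p powi y + omega p powi (- y)"
proof -
  have "p > 0"
    using assms(1) prime_gt_0_nat by blast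
  from assms have "[x = y] (mod int p) \<or> [x = - y] (mod int p)"
    by (simp add: prime_dvd_square_diff_iff)
  then show ?thesis
  proof
    assume "[x = y] (mod int p)"
    then have "omega p powi x = omega p powi y" "omega p powi (- x) = omega p powi (- y)"
      using \<open>p > 0\<close> by (simp_all add: omega_powi_eq_iff cong_minus_minus_iff)
    then show ?thesis
      by simp
  next
    assume "[x = - y] (mod int p)"
    then have "omega p powi x = omega p powi (- y)" "omega p powi (- x) = omega p powi y"
      using \<open>p > 0\<close> by (simp_all add: omega_powi_eq_iff) (metis cong_minus_minus_iff minus_minus)
    then show ?thesis
      by simp
  qed
qed

lemma prime_dvd_cross_differences:
  fixes q A B X Y :: int
  assumes q: "prime q" and A: "\<not> q dvd A" and B: "\<not> q dvd B"
    and AX: "q dvd A * X - A * Y \<or> q dvd A * X - B * Y"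
    and BX: "q dvd B * X - A * Y \<or> q dvd B * X - B * Y"
  shows "q dvd X - Y \<or> (q dvd A + B \<and> q dvd X + Y)"
proof -
  have cancel: "q dvd C * Z \<Longrightarrow> \<not> q dvd C \<Longrightarrow> q dvd Z" for C Z
    using q by (simp add: prime_dvd_mult_iff)
  have "A * X - A * Y = A * (X - Y)" "B * X - B * Y = B * (X - Y)"
    by (simp_all add: algebra_simps)
  then consider "q dvd X - Y" | "q dvd A * X - B * Y" "q dvd B * X - A * Y"
    using AX BX cancel A B by metis
  then show ?thesis
  proof cases
    case 2
    have "(A * X - B * Y) + (B * X - A * Y) = (A + B) * (X - Y)"
      by (simp add: algebra_simps)
    then have "q dvd (A + B) * (X - Y)"
      using 2 by (metis dvd_add)
    then have "q dvd X - Y \<or> q dvd A + B"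
      using q by (auto simp: prime_dvd_mult_iff)
    moreover have "A * (X + Y) = (A * X - B * Y) + Y * (A + B)"
      by (simp add: algebra_simps)
    then have "q dvd A + B \<Longrightarrow> q dvd X + Y"
      using 2 A cancel by (metis dvd_add dvd_mult)
    ultimately show ?thesis
      by blast
  qed simp
qed

definition circ_exponents :: "nat \<Rightarrow> nat \<Rightarrow> nat \<Rightarrow> int multiset" where
  "circ_exponents a1 a2 j =
     {#int a1 * int j, - (int a1 * int j), int a2 * int j, - (int a2 * int j)#}"

lemma circ_eig_eq_sum_mset:
  "circ_eig n a1 a2 j = (\<Sum>e\<in>#circ_exponents a1 a2 j. omega n powi e)"
  by (simp add: circ_eig_def circ_exponents_def power_int_minus add.assoc flip: power_int_of_nat)

lemma circ_eig_eq_imp_cong_squares: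
  assumes p: "prime p" and "\<not> p dvd a1" and "\<not> p dvd a2"
    and eq: "circ_eig p a1 a2 j = circ_eig p a1 a2 k"
  shows "int p dvd (int j)^2 - (int k)^2
    \<or> (int p dvd (int a1)^2 + (int a2)^2 \<and> int p dvd (int j)^2 + (int k)^2)"
proof -
  define A B X Y where "A = (int a1)^2" and "B = (int a2)^2" and "X = (int j)^2" and "Y = (int k)^2"
  have p_int: "prime (int p)"
    using p by simp
  have residues: "image_mset (\<lambda>e. e mod int p) (circ_exponents a1 a2 j)
                = image_mset (\<lambda>e. e mod int p) (circ_exponents a1 a2 k)"
  proof (rule image_mset_mod_eq_if_omega_sums_eq[OF p])
    show "size (circ_exponents a1 a2 j) = size (circ_exponents a1 a2 k)"
      by (simp add: circ_exponents_def)
    show "(\<Sum>e\<in>#circ_exponents a1 a2 j. omega p powi e) = (\<Sum>e\<in>#circ_exponents a1 a2 k. omega p powi e)"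
      using eq by (simp only: circ_eig_eq_sum_mset)
  qed
  have "\<exists>e\<in>#circ_exponents a1 a2 k. [x = e] (mod int p)" if "x \<in># circ_exponents a1 a2 j" for x
  proof -
    from that have "x mod int p \<in># image_mset (\<lambda>e. e mod int p) (circ_exponents a1 a2 j)"
      by simp
    then have "x mod int p \<in># image_mset (\<lambda>e. e mod int p) (circ_exponents a1 a2 k)"
      by (simp only: residues)
    then show ?thesis
      by (auto simp: cong_def)
  qed
  then have "int p dvd x^2 - (int a1 * int k)^2 \<or> int p dvd x^2 - (int a2 * int k)^2"
    if "x \<in># circ_exponents a1 a2 j" for x
    using that by (fastforce simp: circ_exponents_def prime_dvd_square_diff_iff[OF p_int])
  from this[of "int a1 * int j"] this[of "int a2 * int j"]
  have "int p dvd A * X - A * Y \<or> int p dvd A * X - B * Y"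
       "int p dvd B * X - A * Y \<or> int p dvd B * X - B * Y"
    by (simp_all add: circ_exponents_def A_def B_def X_def Y_def power_mult_distrib)
  moreover have "\<not> int p dvd A" "\<not> int p dvd B"
    using assms by (simp_all add: A_def B_def prime_dvd_power_iff flip: of_nat_power)
  ultimately show ?thesis
    using prime_dvd_cross_differences[OF p_int] by (simp add: A_def B_def X_def Y_def)
qed

lemma circ_eig_eq_if_cong_squares:
  assumes p: "prime p"
    and "int p dvd (int j)^2 - (int k)^2
      \<or> (int p dvd (int a1)^2 + (int a2)^2 \<and> int p dvd (int j)^2 + (int k)^2)"
  shows "circ_eig p a1 a2 j = circ_eig p a1 a2 k"
proof -
  define A B X Y where "A = (int a1)^2" and "B = (int a2)^2" and "X = (int j)^2" and "Y = (int k)^2"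
  define F where "F x = omega p powi x + omega p powi (- x)" for x
  have eig: "circ_eig p a1 a2 i = F (int a1 * int i) + F (int a2 * int i)" for i
    by (simp add: circ_eig_eq_sum_mset circ_exponents_def F_def algebra_simps)
  have F_eq: "F x = F y" if "int p dvd x^2 - y^2" for x y
    unfolding F_def using omega_powi_add_neg_eq[OF p that] .
  from assms(2) consider "int p dvd X - Y" | "int p dvd A + B" "int p dvd X + Y"
    by (auto simp: A_def B_def X_def Y_def)
  then show ?thesis
  proof cases
    case 1
    have "(int a * int j)^2 - (int a * int k)^2 = (int a)^2 * (X - Y)" for a
      by (simp add: X_def Y_def algebra_simps power_mult_distrib)
    then have "F (int a * int j) = F (int a * int k)" for a
      using 1 by (intro F_eq) simp
    then show ?thesis
      by (simp add: eig)
  next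
    case 2
    have "(int a1 * int j)^2 - (int a2 * int k)^2 = A * (X + Y) - Y * (A + B)"
         "(int a2 * int j)^2 - (int a1 * int k)^2 = B * (X + Y) - Y * (A + B)"
      by (simp_all add: A_def B_def X_def Y_def algebra_simps power_mult_distrib)
    then have "F (int a1 * int j) = F (int a2 * int k)" "F (int a2 * int j) = F (int a1 * int k)"
      using 2 by (auto intro!: F_eq)
    then show ?thesis
      by (simp add: eig)
  qed
qed

lemma circ_eig_eq_iff:
  assumes "prime p" and "\<not> p dvd a1" and "\<not> p dvd a2"
  shows "circ_eig p a1 a2 j = circ_eig p a1 a2 k \<longleftrightarrow>
           [j^2 = k^2] (mod p) \<or> (p dvd a1^2 + a2^2 \<and> p dvd j^2 + k^2)"
proof -
  have "[j^2 = k^2] (mod p) \<longleftrightarrow> int p dvd (int j)^2 - (int k)^2"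
    by (rule cong_squares_iff_int_dvd)
  moreover have "p dvd a1^2 + a2^2 \<longleftrightarrow> int p dvd (int a1)^2 + (int a2)^2"
    and "p dvd j^2 + k^2 \<longleftrightarrow> int p dvd (int j)^2 + (int k)^2"
    by (simp_all flip: int_dvd_int_iff)
  ultimately show ?thesis
    using circ_eig_eq_imp_cong_squares[OF assms] circ_eig_eq_if_cong_squares[OF assms(1)] by metis
qed

lemma cong_square_iff:
  fixes p j k :: nat
  assumes "prime p" and "j < p" and "k < p"
  shows "[j^2 = k^2] (mod p) \<longleftrightarrow> j = k \<or> j + k = p"
proof -
  have p_int: "prime (int p)"
    using assms(1) by simp
  have "[j^2 = k^2] (mod p) \<longleftrightarrow> int p dvd (int j)^2 - (int k)^2"
    by (rule cong_squares_iff_int_dvd)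
  also have "\<dots> \<longleftrightarrow> [int j = int k] (mod int p) \<or> [int j = - int k] (mod int p)"
    by (rule prime_dvd_square_diff_iff[OF p_int])
  also have "\<dots> \<longleftrightarrow> j = k \<or> j + k = p"
    using assms(2,3) by (auto simp: cong_def zmod_zminus1_eq_if)
  finally show ?thesis .
qed

lemma cong_square_iff_dvd_add:
  fixes p j k :: nat
  assumes "prime p" and "0 < j" and "j < p" and "0 < k" and "k < p"
  shows "[j^2 = k^2] (mod p) \<longleftrightarrow> j = k \<or> p dvd j + k"
proof -
  have "p dvd j + k \<longleftrightarrow> j + k = p"
  proof
    assume "p dvd j + k"
    then have "p \<le> j + k" and "p dvd j + k - p"
      using assms by (auto dest: dvd_imp_le)
    moreover have "j + k - p < p"
      using assms by simp
    ultimately show "j + k = p"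
      using nat_dvd_not_less by fastforce
  qed simp
  then show ?thesis
    using cong_square_iff[OF assms(1,3,5)] by simp
qed

lemma card_cong_square:
  fixes p i :: nat
  assumes "prime p" and "odd p" and "i < p"
  shows "card {j \<in> {..<p}. [j^2 = i^2] (mod p)} = (if i = 0 then 1 else 2)"
proof -
  have "{j \<in> {..<p}. [j^2 = i^2] (mod p)} = {j \<in> {..<p}. j = i \<or> j + i = p}"
    using cong_square_iff[OF assms(1) _ assms(3)] by auto
  also have "\<dots> = (if i = 0 then {0} else {i, p - i})"
  proof (cases "i = 0")
    case False
    have "j + i = p \<longleftrightarrow> j = p - i" for j
      using assms(3) by linarith
    then show ?thesis
      using False assms(3) by auto
  qed (use assms(3) in auto)
  finally have "{j \<in> {..<p}. [j^2 = i^2] (mod p)} = (if i = 0 then {0} else {i, p - i})" .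
  moreover have "p - i \<noteq> i"
    using assms(2,3) by presburger
  ultimately show ?thesis
    by simp
qed

section \<open>Diagonalisation of circulant matrices\<close>

lemma index_mult_mat_sum:
  assumes "A \<in> carrier_mat n n" and "B \<in> carrier_mat n n" and "i < n" and "j < n"
  shows "(A * B) $$ (i, j) = (\<Sum>l<n. A $$ (i, l) * B $$ (l, j))"
  using assms by (auto simp: scalar_prod_def atLeast0LessThan intro!: sum.cong)

definition dft_mat :: "nat \<Rightarrow> complex mat" where
  "dft_mat n = mat n n (\<lambda>(i, j). omega n ^ (i * j))"

definition idft_mat :: "nat \<Rightarrow> complex mat" where
  "idft_mat n = mat n n (\<lambda>(i, j). omega n powi (- int (i * j)) / of_nat n)"

lemma dft_mat_mult_idft_mat:
  assumes "n > 0"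
  shows "dft_mat n * idft_mat n = 1\<^sub>m n"
proof (rule eq_matI)
  fix i k
  assume "i < dim_row (1\<^sub>m n :: complex mat)" "k < dim_col (1\<^sub>m n :: complex mat)"
  then have "i < n" "k < n"
    by simp_all
  have "omega n ^ (i * l) * (omega n powi (- int (l * k)) / of_nat n)
      = omega n powi ((int i - int k) * int l) / of_nat n" for l
  proof -
    have "omega n powi (int (i * l) + - int (l * k)) = omega n ^ (i * l) * omega n powi (- int (l * k))"
      by (simp only: power_int_add[OF disjI1[OF omega_nonzero]] power_int_of_nat)
    moreover have "(int i - int k) * int l = int (i * l) + - int (l * k)"
      by (simp add: algebra_simps)
    ultimately show ?thesis
      by (simp only: times_divide_eq_right)
  qed
  then have "(dft_mat n * idft_mat n) $$ (i, k) = (\<Sum>l<n. omega n powi ((int i - int k) * int l) / of_nat n)"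
    using \<open>i < n\<close> \<open>k < n\<close>
    by (subst index_mult_mat_sum[of _ n]) (auto simp: dft_mat_def idft_mat_def intro!: sum.cong)
  also have "\<dots> = (\<Sum>l<n. omega n powi ((int i - int k) * int l)) / of_nat n"
    by (simp add: sum_divide_distrib)
  also have "\<dots> = 1\<^sub>m n $$ (i, k)"
  proof (cases "i = k")
    case False
    have "\<not> int n dvd int i - int k"
    proof
      assume "int n dvd int i - int k"
      then have "int n \<le> \<bar>int i - int k\<bar>"
        using False dvd_imp_le_int[of "int i - int k" "int n"] by simp
      then show False
        using \<open>i < n\<close> \<open>k < n\<close> by linarith
    qed
    then show ?thesis
      using sum_omega_powi_eq_0[OF \<open>n > 0\<close>] False \<open>i < n\<close> \<open>k < n\<close> by simp
  qed (use \<open>n > 0\<close> \<open>k < n\<close> in simp)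
  finally show "(dft_mat n * idft_mat n) $$ (i, k) = 1\<^sub>m n $$ (i, k)" .
qed (simp_all add: dft_mat_def idft_mat_def)

definition circulant_mat :: "nat \<Rightarrow> (int \<Rightarrow> complex) \<Rightarrow> complex mat" where
  "circulant_mat n c = mat n n (\<lambda>(i, j). c (int i - int j))"

definition circulant_eig :: "nat \<Rightarrow> (int \<Rightarrow> complex) \<Rightarrow> nat \<Rightarrow> complex" where
  "circulant_eig n c j = (\<Sum>d<n. c (int d) * omega n powi (- (int d * int j)))"

lemma sum_periodic_reflect:
  assumes "n > 0" and periodic: "\<And>x. g (x mod int n) = g x"
  shows "(\<Sum>l<n. g (int i - int l)) = (\<Sum>d<n. g (int d))"
proof -
  define r where "r l = nat ((int i - int l) mod int n)" for l
  have r_below: "r l \<in> {..<n}" for l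
    using \<open>n > 0\<close> by (simp add: r_def nat_less_iff)
  have r_involution: "r (r l) = l" if "l \<in> {..<n}" for l
    using \<open>n > 0\<close> that by (simp add: r_def mod_diff_right_eq)
  have "g (int (r l)) = g (int i - int l)" for l
    using \<open>n > 0\<close> periodic by (simp add: r_def)
  then show ?thesis
    using r_below r_involution by (intro sum.reindex_bij_witness[of _ r r]) auto
qed

lemma circulant_mat_mult_dft_mat:
  assumes "n > 0" and periodic: "\<And>x. c (x mod int n) = c x"
  shows "circulant_mat n c * dft_mat n = dft_mat n * mat_diag n (circulant_eig n c)"
proof (rule eq_matI)
  fix i j
  assume "i < dim_row (dft_mat n * mat_diag n (circulant_eig n c))"
    "j < dim_col (dft_mat n * mat_diag n (circulant_eig n c))"
  then have "i < n" "j < n"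
    by (simp_all add: dft_mat_def mat_diag_def)
  define g where "g x = c x * omega n powi (- (x * int j))" for x
  have g_periodic: "g (x mod int n) = g x" for x
  proof -
    have "[x mod int n * int j = x * int j] (mod int n)"
      by (simp add: cong_def mod_mult_left_eq)
    then have "[- (x mod int n * int j) = - (x * int j)] (mod int n)"
      by (simp add: cong_minus_minus_iff)
    then show ?thesis
      using \<open>n > 0\<close> by (simp add: g_def periodic omega_powi_eq_iff)
  qed
  have reflect: "(\<Sum>l<n. g (int i - int l)) = circulant_eig n c j"
    unfolding sum_periodic_reflect[where g = g, OF \<open>n > 0\<close> g_periodic] by (simp add: circulant_eig_def g_def)
  have entry: "c (int i - int l) * omega n ^ (l * j) = omega n ^ (i * j) * g (int i - int l)" for l
  proof -
    have "omega n powi (int (i * j) + - ((int i - int l) * int j))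
        = omega n ^ (i * j) * omega n powi (- ((int i - int l) * int j))"
      by (simp only: power_int_add[OF disjI1[OF omega_nonzero]] power_int_of_nat)
    moreover have "int (i * j) + - ((int i - int l) * int j) = int (l * j)"
      by (simp add: algebra_simps)
    ultimately have "omega n ^ (l * j) = omega n ^ (i * j) * omega n powi (- ((int i - int l) * int j))"
      by (simp only: power_int_of_nat)
    then show ?thesis
      by (simp add: g_def mult_ac)
  qed
  have "(circulant_mat n c * dft_mat n) $$ (i, j)
      = (\<Sum>l<n. circulant_mat n c $$ (i, l) * dft_mat n $$ (l, j))"
    by (rule index_mult_mat_sum) (simp_all add: circulant_mat_def dft_mat_def \<open>i < n\<close> \<open>j < n\<close>)
  also have "\<dots> = (\<Sum>l<n. c (int i - int l) * omega n ^ (l * j))"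
    by (rule sum.cong) (simp_all add: circulant_mat_def dft_mat_def \<open>i < n\<close> \<open>j < n\<close>)
  also have "\<dots> = omega n ^ (i * j) * (\<Sum>l<n. g (int i - int l))"
    by (simp add: entry sum_distrib_left)
  also have "\<dots> = (dft_mat n * mat_diag n (circulant_eig n c)) $$ (i, j)"
    using \<open>i < n\<close> \<open>j < n\<close> by (simp add: reflect mat_diag_mult_right[of _ n] dft_mat_def)
  finally show "(circulant_mat n c * dft_mat n) $$ (i, j) = (dft_mat n * mat_diag n (circulant_eig n c)) $$ (i, j)" .
qed (simp_all add: circulant_mat_def dft_mat_def mat_diag_def)

lemma similar_circulant_mat_diag:
  assumes "n > 0" and "\<And>x. c (x mod int n) = c x"
  shows "similar_mat (circulant_mat n c) (mat_diag n (circulant_eig n c))"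
proof -
  have carriers: "circulant_mat n c \<in> carrier_mat n n" "dft_mat n \<in> carrier_mat n n"
    "idft_mat n \<in> carrier_mat n n" "mat_diag n (circulant_eig n c) \<in> carrier_mat n n"
    by (simp_all add: circulant_mat_def dft_mat_def idft_mat_def)
  have right_inv: "dft_mat n * idft_mat n = 1\<^sub>m n"
    by (rule dft_mat_mult_idft_mat[OF \<open>n > 0\<close>])
  then have left_inv: "idft_mat n * dft_mat n = 1\<^sub>m n"
    by (rule mat_mult_left_right_inverse[OF carriers(2,3)])
  have "circulant_mat n c = circulant_mat n c * (dft_mat n * idft_mat n)"
    unfolding right_inv using carriers(1) by (rule right_mult_one_mat[symmetric])
  also have "\<dots> = circulant_mat n c * dft_mat n * idft_mat n"
    by (rule assoc_mult_mat[symmetric, OF carriers(1-3)])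
  also have "\<dots> = dft_mat n * mat_diag n (circulant_eig n c) * idft_mat n"
    by (simp add: circulant_mat_mult_dft_mat assms)
  finally have decomposition:
    "circulant_mat n c = dft_mat n * mat_diag n (circulant_eig n c) * idft_mat n" .
  show ?thesis
    by (rule similar_matI[OF _ right_inv left_inv decomposition]) (use carriers in auto)
qed

lemma order_char_poly_similar_mat_diag:
  assumes "similar_mat A (mat_diag n f)"
  shows "order x (char_poly A) = card {j \<in> {..<n}. f j = x}"
proof -
  have "upper_triangular (mat_diag n f)"
    by (auto simp: upper_triangular_def mat_diag_def)
  then have "char_poly (mat_diag n f) = (\<Prod>a\<leftarrow>diag_mat (mat_diag n f). [:- a, 1:])"
    by (rule char_poly_upper_triangular[OF mat_diag_dim])
  moreover have "diag_mat (mat_diag n f) = map f [0..<n]"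
    by (auto simp: diag_mat_def mat_diag_def intro!: map_cong)
  ultimately have "char_poly A = (\<Prod>a\<leftarrow>map f [0..<n]. [:- a, 1:])"
    by (simp only: char_poly_similar[OF assms])
  then have "order x (char_poly A) = sum_list (map (order x) (map (\<lambda>a. [:- a, 1:]) (map f [0..<n])))"
    by (simp only:) (rule order_prod_list, auto)
  also have "\<dots> = (\<Sum>j<n. if f j = x then 1 else 0)"
    using order_linear'[of x "- f j" for j] by (simp add: interv_sum_list_conv_sum_set_nat atLeast0LessThan o_def)
  also have "\<dots> = card {j \<in> {..<n}. f j = x}"
    using sum.inter_filter[of "{..<n}" "\<lambda>_. 1 :: nat" "\<lambda>j. f j = x"] by simp
  finally show ?thesis .
qed

definition circ_adj_entry :: "nat \<Rightarrow> nat \<Rightarrow> nat \<Rightarrow> int \<Rightarrow> complex" where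
  "circ_adj_entry n a1 a2 d =
     (if [d = int a1] (mod int n) \<or> [d = - int a1] (mod int n)
       \<or> [d = int a2] (mod int n) \<or> [d = - int a2] (mod int n) then 1 else 0)"

lemma circ_adj_eq_circulant_mat: "circ_adj n a1 a2 = circulant_mat n (circ_adj_entry n a1 a2)"
  by (simp add: circ_adj_def circulant_mat_def circ_adj_entry_def)

lemma circ_adj_entry_mod: "circ_adj_entry n a1 a2 (d mod int n) = circ_adj_entry n a1 a2 d"
  by (simp add: circ_adj_entry_def cong_def)

lemma circulant_eig_circ_adj_entry:
  assumes "0 < a1" and "a1 < a2" and "2 * a2 < n"
  shows "circulant_eig n (circ_adj_entry n a1 a2) j = circ_eig n a1 a2 j"
proof -
  have "n > 0"
    using assms by simp
  \<comment> \<open>the residues of \<open>\<plusminus>a1, \<plusminus>a2\<close>, pairwise distinct since \<open>0 < a1 < a2 < n / 2\<close>\<close>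
  define T where "T = {a1, n - a1, a2, n - a2}"
  define h where "h d = omega n powi (- (int d * int j))" for d
  have entry: "circ_adj_entry n a1 a2 (int d) = (if d \<in> T then 1 else 0)" if "d < n" for d
  proof -
    have "(- int a) mod int n = int (n - a)" if "0 < a" "a < n" for a
      using that by (simp add: zmod_zminus1_eq_if of_nat_diff)
    then show ?thesis
      using assms \<open>d < n\<close> by (auto simp: circ_adj_entry_def T_def cong_def)
  qed
  have h_reflect: "h (n - a) = omega n powi (int a * int j)" if "a \<le> n" for a
    using \<open>n > 0\<close> that by (simp add: h_def omega_powi_eq_iff cong_iff_dvd_diff of_nat_diff algebra_simps)
  have "circulant_eig n (circ_adj_entry n a1 a2) j = (\<Sum>d<n. if d \<in> T then h d else 0)"
    unfolding circulant_eig_def h_def by (rule sum.cong) (simp_all add: entry)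
  also have "\<dots> = sum h ({..<n} \<inter> T)"
    by (rule sum.inter_restrict[symmetric]) simp
  also have "\<dots> = sum h T"
    using assms by (simp add: T_def Int_absorb1 subset_iff)
  also have "\<dots> = h a1 + h (n - a1) + h a2 + h (n - a2)"
  proof -
    have "a1 \<notin> {n - a1, a2, n - a2}" "n - a1 \<notin> {a2, n - a2}" "a2 \<noteq> n - a2"
      using assms by auto
    then show ?thesis
      by (simp add: T_def add.assoc)
  qed
  also have "\<dots> = circ_eig n a1 a2 j"
    using assms h_reflect[of a1] h_reflect[of a2]
    by (simp add: circ_eig_eq_sum_mset circ_exponents_def h_def ac_simps)
  finally show ?thesis .
qed

lemma order_char_poly_circ_adj:
  assumes "0 < a1" and "a1 < a2" and "2 * a2 < n"
  shows "order x (char_poly (circ_adj n a1 a2)) = card {j \<in> {..<n}. circ_eig n a1 a2 j = x}"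
proof -
  have "similar_mat (circ_adj n a1 a2) (mat_diag n (circulant_eig n (circ_adj_entry n a1 a2)))"
    unfolding circ_adj_eq_circulant_mat using assms
    by (intro similar_circulant_mat_diag circ_adj_entry_mod) simp
  moreover have "circulant_eig n (circ_adj_entry n a1 a2) = circ_eig n a1 a2"
    using circulant_eig_circ_adj_entry[OF assms] by (rule ext)
  ultimately show ?thesis
    by (simp add: order_char_poly_similar_mat_diag)
qed

section \<open>The spectrum of the circulant graph\<close>

lemma order_char_poly_circ_adj_eig:
  assumes "prime n" and "0 < a1" and "a1 < a2" and "2 * a2 < n"
    and "\<not> n dvd a1^2 + a2^2" and "j < n"
  shows "order (circ_eig n a1 a2 j) (char_poly (circ_adj n a1 a2)) = (if j = 0 then 1 else 2)"
proof -
  have "odd n"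
    using assms by (intro prime_odd_nat) auto
  have "\<not> n dvd a1" "\<not> n dvd a2"
    using assms by (auto dest: dvd_imp_le)
  then have "circ_eig n a1 a2 i = circ_eig n a1 a2 j \<longleftrightarrow> [i^2 = j^2] (mod n)" for i
    using circ_eig_eq_iff[OF \<open>prime n\<close>] assms(5) by simp
  then show ?thesis
    using order_char_poly_circ_adj[OF assms(2-4)] card_cong_square[OF \<open>prime n\<close> \<open>odd n\<close> \<open>j < n\<close>]
    by simp
qed

theorem proposition3:
  fixes n a1 a2 :: nat
  assumes "prime n" and "1 \<le> a1" and "a1 < a2" and "2 * a2 \<le> n"
  shows "(\<not> n dvd (a1^2 + a2^2) \<longrightarrow>
            circ_eig n a1 a2 0 = 4
          \<and> order 4 (char_poly (circ_adj n a1 a2)) = 1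
          \<and> (\<forall>j\<in>{1..n-1}. order (circ_eig n a1 a2 j) (char_poly (circ_adj n a1 a2)) = 2)
          \<and> (\<forall>j\<in>{1..n-1}. \<forall>k\<in>{1..n-1}.
               circ_eig n a1 a2 j = circ_eig n a1 a2 k \<longleftrightarrow> j = k \<or> n dvd (j + k)))
       \<and> (n dvd (a1^2 + a2^2) \<longrightarrow>
            (\<forall>j\<in>{1..n-1}. \<forall>k\<in>{1..n-1}.
               circ_eig n a1 a2 j = circ_eig n a1 a2 k \<longleftrightarrow>
                 j = k \<or> n dvd (j + k) \<or> n dvd (j^2 + k^2)))"
proof -
  have "odd n"
    using assms by (intro prime_odd_nat) auto
  then have "2 * a2 < n"
    using assms(4) by (cases "2 * a2 = n") auto
  have "\<not> n dvd a1" "\<not> n dvd a2"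
    using assms \<open>2 * a2 < n\<close> by (auto dest: dvd_imp_le)
  note eig_iff = circ_eig_eq_iff[OF \<open>prime n\<close> this]
  note order_eig = order_char_poly_circ_adj_eig[OF \<open>prime n\<close> _ \<open>a1 < a2\<close> \<open>2 * a2 < n\<close>]
  have sq_iff: "[j^2 = k^2] (mod n) \<longleftrightarrow> j = k \<or> n dvd (j + k)" if "j \<in> {1..n-1}" "k \<in> {1..n-1}" for j k
    using that by (intro cong_square_iff_dvd_add \<open>prime n\<close>) auto
  have eig_0: "circ_eig n a1 a2 0 = 4"
    by (simp add: circ_eig_def)
  show ?thesis
  proof (intro conjI impI)
    assume "\<not> n dvd (a1^2 + a2^2)"
    then show "circ_eig n a1 a2 0 = 4"
      and "order 4 (char_poly (circ_adj n a1 a2)) = 1"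
      and "\<forall>j\<in>{1..n-1}. order (circ_eig n a1 a2 j) (char_poly (circ_adj n a1 a2)) = 2"
      and "\<forall>j\<in>{1..n-1}. \<forall>k\<in>{1..n-1}.
             circ_eig n a1 a2 j = circ_eig n a1 a2 k \<longleftrightarrow> j = k \<or> n dvd (j + k)"
      using order_eig[of 0] assms(2) \<open>2 * a2 < n\<close> by (auto simp: eig_0 order_eig eig_iff sq_iff)
  next
    assume "n dvd (a1^2 + a2^2)"
    then show "\<forall>j\<in>{1..n-1}. \<forall>k\<in>{1..n-1}.
            circ_eig n a1 a2 j = circ_eig n a1 a2 k \<longleftrightarrow> j = k \<or> n dvd (j + k) \<or> n dvd (j^2 + k^2)"
      by (simp add: eig_iff sq_iff)
  qed
qed

end
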